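(* Let $i_n^B$ and $i_n^D$ denote the numbers of involutions (elements $w$ with $w^2=e$) in $B_n$ and $D_n$ respectively. Then \[2i_n^D-i_n^B=\begin{cases}0 & n\text{ odd},\\ 2^{n/2}(n-1)!!=\dfrac{n!}{(n/2)!} & n\text{ even}.\end{cases}\] Therefore, for all positive integers $n$, $i_n^D\le i_n^B\le 2i_n^D$.
   Context: $B_n$ is the group of permutations $w$ of $\{\pm1,\dots,\pm n\}$ with $w(-i)=-w(i)$ for all $i$, and $D_n=\{w\in B_n:w(1)w(2)\cdots w(n)>0\}$. $(n-1)!!=(n-1)(n-3)\cdots1$ for $n$ even. *)

theory Defs
  imports Complex_Main "HOL-Combinatorics.Permutations"
begin

text \<open>Signed permutations: B_n is the group of permutations w of {+-1,...,+-n}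
  with w(-i) = -w(i). We represent them as functions int => int that permute
  the set {-n..n} - {0} (and are the identity elsewhere).\<close>

definition typeB :: "nat \<Rightarrow> (int \<Rightarrow> int) set" where
  "typeB n = {w. w permutes ({- int n .. int n} - {0}) \<and> (\<forall>i. w (- i) = - w i)}"

definition typeD :: "nat \<Rightarrow> (int \<Rightarrow> int) set" where
  "typeD n = {w \<in> typeB n. (\<Prod>i\<in>{1 .. int n}. w i) > 0}"

definition num_involutions :: "(int \<Rightarrow> int) set \<Rightarrow> nat" where
  "num_involutions G = card {w \<in> G. w \<circ> w = id}"

fun dfact :: "nat \<Rightarrow> nat" where
  "dfact 0 = 1"
| "dfact (Suc 0) = 1"
| "dfact (Suc (Suc m)) = Suc (Suc m) * dfact m"

end

theory Submission
  imports Defs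
begin

text \<open>
  Write T(S) for the sum of sgn (prod over i in S of w(i)) over the involutions w of the signed
  permutation group of a finite set S of positive integers, so that 2 i_n^D - i_n^B = T({1..n}).
  Sort the involutions by v = w(a) for a fixed a in S.  Those with v = a and v = -a are the
  involutions of S - {a}, with the sign kept resp. flipped, so they cancel.  For b in S - {a}
  and v = b or v = -b, the factor w(a) w(b) = a b is positive and w is otherwise an arbitrary
  involution of S - {a, b}.  Hence T(S) = 2 (sum over b in S - {a} of T(S - {a, b})), so T(S)
  depends only on k = |S|, satisfies t(k + 2) = 2 (k + 1) t(k), t(0) = 1, t(1) = 0, and
  therefore vanishes for odd k and equals 2^m (2m - 1)!! for k = 2m.  As T is non-negative
  and i_n^D <= i_n^B, the inequalities follow.
\<close>

lemma sum_sgn_eq_card: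
  fixes f :: "'a \<Rightarrow> 'b::linordered_idom"
  assumes "finite A" and "\<And>x. x \<in> A \<Longrightarrow> f x \<noteq> 0"
  shows "(\<Sum>x\<in>A. sgn (f x)) = 2 * of_nat (card {x \<in> A. 0 < f x}) - of_nat (card A)"
proof -
  have "(\<Sum>x\<in>A. sgn (f x)) = (\<Sum>x\<in>A. if 0 < f x then 1 else - 1)"
    using assms(2) by (intro sum.cong) (auto simp: sgn_if)
  also have "\<dots> = of_nat (card {x \<in> A. 0 < f x}) - of_nat (card {x \<in> A. \<not> 0 < f x})"
    using assms(1) by (simp add: sum.If_cases Int_def sum_negf)
  also have "card {x \<in> A. \<not> 0 < f x} = card A - card {x \<in> A. 0 < f x}"
    using assms(1) by (subst card_Diff_subset[symmetric]) (auto intro: arg_cong[where f = card])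
  finally show ?thesis
    using assms(1) by (simp add: of_nat_diff card_mono)
qed

lemma dfact_mult_fact: "2 ^ k * dfact (2 * k - 1) * fact k = (fact (2 * k) :: nat)"
proof (induction k)
  case (Suc k)
  have "dfact (2 * Suc k - 1) = (2 * k + 1) * dfact (2 * k - 1)"
    by (cases k) simp_all
  moreover have "fact (2 * Suc k) = (2 * k + 2) * (2 * k + 1) * (fact (2 * k) :: nat)"
    by (simp add: algebra_simps)
  ultimately show ?case
    using Suc.IH by (simp add: algebra_simps)
qed simp

lemma dfact_eq_fact_div:
  "real (2 ^ k * dfact (2 * k - 1)) = fact (2 * k) / fact k"
proof -
  have "real (2 ^ k * dfact (2 * k - 1)) * fact k = fact (2 * k)"
    using arg_cong[OF dfact_mult_fact[of k], of real] by (simp only: of_nat_mult of_nat_fact)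
  then show ?thesis by (simp add: field_simps)
qed

definition signed_set :: "int set \<Rightarrow> int set" where
  "signed_set S = S \<union> uminus ` S"

lemma in_signed_set_iff: "x \<in> signed_set S \<longleftrightarrow> x \<in> S \<or> - x \<in> S"
  unfolding signed_set_def by (auto simp: image_iff) (metis minus_minus)

lemma finite_signed_set: "finite S \<Longrightarrow> finite (signed_set S)"
  unfolding signed_set_def by simp

definition signed_involutions :: "int set \<Rightarrow> (int \<Rightarrow> int) set" where
  "signed_involutions S =
     {w. (\<forall>x. x \<notin> signed_set S \<longrightarrow> w x = x) \<and> (\<forall>x. w (w x) = x) \<and> (\<forall>x. w (- x) = - w x)}"

lemma signed_involutionD:
  assumes "w \<in> signed_involutions S"
  shows signed_involution_fixes: "x \<notin> signed_set S \<Longrightarrow> w x = x"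
    and signed_involution_involutive: "w (w x) = x"
    and signed_involution_odd: "w (- x) = - w x"
  using assms unfolding signed_involutions_def by auto

lemma signed_involution_mem:
  assumes "w \<in> signed_involutions S" and "x \<in> signed_set S"
  shows "w x \<in> signed_set S"
  by (metis assms signed_involutionD(1,2))

lemma signed_involution_permutes:
  assumes "w \<in> signed_involutions S"
  shows "w permutes signed_set S"
  unfolding permutes_def
  by (metis assms signed_involutionD(1,2))

lemma finite_signed_involutions: "finite S \<Longrightarrow> finite (signed_involutions S)"
  by (rule finite_subset[OF _ finite_permutations[OF finite_signed_set]])
    (auto intro: signed_involution_permutes)

lemma signed_involution_prod_nonzero:
  assumes "w \<in> signed_involutions S" and "0 \<notin> S"
  shows "(\<Prod>i\<in>S. w i) \<noteq> 0"
proof -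
  have "w i \<noteq> 0" if "i \<in> S" for i
    using signed_involution_mem[OF assms(1), of i] that assms(2) by (auto simp: in_signed_set_iff)
  then show ?thesis by (cases "finite S") simp_all
qed

lemma signed_involutions_empty: "signed_involutions {} = {id}"
  unfolding signed_involutions_def signed_set_def by auto

definition involution_sign_sum :: "int set \<Rightarrow> int" where
  "involution_sign_sum S = (\<Sum>w\<in>signed_involutions S. sgn (\<Prod>i\<in>S. w i))"

lemma involution_sign_sum_empty: "involution_sign_sum {} = 1"
  unfolding involution_sign_sum_def signed_involutions_empty by simp

definition swap_extend :: "int \<Rightarrow> int \<Rightarrow> (int \<Rightarrow> int) \<Rightarrow> int \<Rightarrow> int" where
  "swap_extend a v w x =
     (if x = a then v else if x = - a then - v
      else if x = v then a else if x = - v then - a else w x)"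

definition drop_swap :: "int \<Rightarrow> int \<Rightarrow> (int \<Rightarrow> int) \<Rightarrow> int \<Rightarrow> int" where
  "drop_swap a v u x = (if x \<in> {a, - a, v, - v} then x else u x)"

context
  fixes a v :: int and S :: "int set"
  assumes pos: "\<forall>x\<in>insert a S. 0 < x" and a_notin: "a \<notin> S"
    and v_mem: "v \<in> signed_set (insert a S)"
begin

lemma swap_points_nonzero: "a \<noteq> 0" "v \<noteq> 0"
  using pos v_mem by (auto simp: in_signed_set_iff)

lemma swap_points_notin: "x \<in> {a, - a, v, - v} \<Longrightarrow> x \<notin> signed_set (S - {\<bar>v\<bar>})"
  using pos a_notin v_mem by (fastforce simp: in_signed_set_iff abs_if)

lemma signed_set_insert_split:
  "signed_set (insert a S) = {a, - a, v, - v} \<union> signed_set (S - {\<bar>v\<bar>})"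
  using v_mem by (auto simp: in_signed_set_iff abs_if)

lemma swap_extend_mem:
  assumes w: "w \<in> signed_involutions (S - {\<bar>v\<bar>})"
  shows "swap_extend a v w \<in> signed_involutions (insert a S)"
proof -
  let ?u = "swap_extend a v w"
  have fixed: "w x = x" if "x \<in> {a, - a, v, - v}" for x
    using signed_involution_fixes[OF w swap_points_notin[OF that]] .
  have away: "w x \<notin> {a, - a, v, - v}" if "x \<notin> {a, - a, v, - v}" for x
    using that fixed signed_involution_involutive[OF w] by metis
  have "?u x = x" if "x \<notin> signed_set (insert a S)" for x
    using that signed_involution_fixes[OF w]
    unfolding signed_set_insert_split swap_extend_def by auto
  moreover have "?u (?u x) = x" for x
    using swap_points_nonzero away[of x] signed_involution_involutive[OF w, of x]
    unfolding swap_extend_def by auto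
  moreover have "?u (- x) = - ?u x" for x
    using swap_points_nonzero signed_involution_odd[OF w, of x]
    unfolding swap_extend_def by auto
  ultimately show ?thesis unfolding signed_involutions_def by blast
qed

lemma drop_swap_mem:
  assumes u: "u \<in> signed_involutions (insert a S)" and ua: "u a = v"
  shows "drop_swap a v u \<in> signed_involutions (S - {\<bar>v\<bar>})"
proof -
  let ?w = "drop_swap a v u"
  have on_swap_points: "u a = v" "u (- a) = - v" "u v = a" "u (- v) = - a"
    using ua signed_involution_odd[OF u] signed_involution_involutive[OF u] by metis+
  have away: "u x \<notin> {a, - a, v, - v}" if "x \<notin> {a, - a, v, - v}" for x
    using that on_swap_points signed_involution_involutive[OF u] by (metis insert_iff empty_iff)
  have "?w x = x" if "x \<notin> signed_set (S - {\<bar>v\<bar>})" for x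
    using that signed_involution_fixes[OF u] unfolding signed_set_insert_split drop_swap_def by auto
  moreover have "?w (?w x) = x" for x
    using away[of x] signed_involution_involutive[OF u, of x] unfolding drop_swap_def by auto
  moreover have "?w (- x) = - ?w x" for x
    using signed_involution_odd[OF u, of x] unfolding drop_swap_def by auto
  ultimately show ?thesis unfolding signed_involutions_def by blast
qed

lemma swap_extend_drop_swap:
  assumes u: "u \<in> signed_involutions (insert a S)" and ua: "u a = v"
  shows "swap_extend a v (drop_swap a v u) = u"
proof
  fix x
  have "u a = v" "u (- a) = - v" "u v = a" "u (- v) = - a"
    using ua signed_involution_odd[OF u] signed_involution_involutive[OF u] by metis+
  then show "swap_extend a v (drop_swap a v u) x = u x"
    unfolding swap_extend_def drop_swap_def by auto
qed

lemma drop_swap_swap_extend: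
  assumes w: "w \<in> signed_involutions (S - {\<bar>v\<bar>})"
  shows "drop_swap a v (swap_extend a v w) = w"
proof
  fix x
  show "drop_swap a v (swap_extend a v w) x = w x"
    using signed_involution_fixes[OF w swap_points_notin]
    unfolding swap_extend_def drop_swap_def by auto
qed

lemma bij_betw_swap_extend:
  "bij_betw (swap_extend a v) (signed_involutions (S - {\<bar>v\<bar>}))
     {u \<in> signed_involutions (insert a S). u a = v}"
proof (rule bij_betw_byWitness[where f' = "drop_swap a v"])
  show "swap_extend a v ` signed_involutions (S - {\<bar>v\<bar>})
      \<subseteq> {u \<in> signed_involutions (insert a S). u a = v}"
    using swap_extend_mem by (auto simp: swap_extend_def)
  show "drop_swap a v ` {u \<in> signed_involutions (insert a S). u a = v}
      \<subseteq> signed_involutions (S - {\<bar>v\<bar>})"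
    using drop_swap_mem by auto
qed (use drop_swap_swap_extend swap_extend_drop_swap in auto)

lemma sgn_prod_swap_extend:
  assumes fin: "finite S" and w: "w \<in> signed_involutions (S - {\<bar>v\<bar>})"
  shows "sgn (\<Prod>i\<in>insert a S. swap_extend a v w i) =
           (if \<bar>v\<bar> = a then sgn v else 1) * sgn (\<Prod>i\<in>S - {\<bar>v\<bar>}. w i)"
proof -
  have unchanged: "(\<Prod>i\<in>S - {\<bar>v\<bar>}. swap_extend a v w i) = (\<Prod>i\<in>S - {\<bar>v\<bar>}. w i)"
    using pos a_notin by (intro prod.cong) (auto simp: swap_extend_def)
  have head: "(\<Prod>i\<in>insert a S. swap_extend a v w i) = v * (\<Prod>i\<in>S. swap_extend a v w i)"
    using fin a_notin by (simp add: swap_extend_def)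
  show ?thesis
  proof (cases "\<bar>v\<bar> = a")
    case True
    then have "S - {\<bar>v\<bar>} = S" using a_notin by auto
    then show ?thesis using True head unchanged by (simp add: sgn_mult)
  next
    case False
    then have b: "\<bar>v\<bar> \<in> S" using v_mem pos by (auto simp: in_signed_set_iff abs_if)
    have "v * swap_extend a v w \<bar>v\<bar> = a * \<bar>v\<bar>"
      using False swap_points_nonzero by (auto simp: swap_extend_def abs_if)
    moreover have "(\<Prod>i\<in>S. swap_extend a v w i) =
        swap_extend a v w \<bar>v\<bar> * (\<Prod>i\<in>S - {\<bar>v\<bar>}. swap_extend a v w i)"
      using fin b by (simp add: prod.remove)
    ultimately show ?thesis
      using False head unchanged pos swap_points_nonzero
      by (simp add: sgn_mult mult.assoc[symmetric])
  qed
qed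

lemma sum_sgn_prod_fiber:
  assumes fin: "finite S"
  shows "(\<Sum>u\<in>{u \<in> signed_involutions (insert a S). u a = v}. sgn (\<Prod>i\<in>insert a S. u i)) =
           (if \<bar>v\<bar> = a then sgn v else 1) * involution_sign_sum (S - {\<bar>v\<bar>})"
  unfolding sum.reindex_bij_betw[OF bij_betw_swap_extend, symmetric] involution_sign_sum_def
  by (simp add: sgn_prod_swap_extend[OF fin] sum_distrib_left)

end

lemma involution_sign_sum_insert:
  assumes pos: "\<forall>x\<in>insert a S. 0 < x" and a_notin: "a \<notin> S" and fin: "finite S"
  shows "involution_sign_sum (insert a S) = 2 * (\<Sum>b\<in>S. involution_sign_sum (S - {b}))"
proof -
  let ?c = "\<lambda>v. (if \<bar>v\<bar> = a then sgn v else 1) * involution_sign_sum (S - {\<bar>v\<bar>})"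
  have a_pos: "0 < a" using pos by simp
  have "involution_sign_sum (insert a S) =
      (\<Sum>v\<in>signed_set (insert a S).
         \<Sum>u\<in>{u \<in> signed_involutions (insert a S). u a = v}. sgn (\<Prod>i\<in>insert a S. u i))"
    unfolding involution_sign_sum_def
    by (rule sum.group[symmetric])
      (use fin in \<open>auto intro: finite_signed_set finite_signed_involutions signed_involution_mem
         simp: in_signed_set_iff\<close>)
  also have "\<dots> = (\<Sum>v\<in>signed_set (insert a S). ?c v)"
    using sum_sgn_prod_fiber[OF pos a_notin _ fin] by (intro sum.cong) auto
  also have "signed_set (insert a S) = {a, - a} \<union> (S \<union> uminus ` S)"
    unfolding signed_set_def by auto
  also have "(\<Sum>v\<in>{a, - a} \<union> (S \<union> uminus ` S). ?c v) =
      ?c a + ?c (- a) + (\<Sum>v\<in>S. ?c v) + (\<Sum>v\<in>uminus ` S. ?c v)"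
  proof -
    have "{a, - a} \<inter> (S \<union> uminus ` S) = {}" using pos a_notin by force
    moreover have "S \<inter> uminus ` S = {}"
      using pos by (auto simp: image_iff) (metis insertCI less_asym neg_less_0_iff_less)
    ultimately show ?thesis using fin a_pos by (simp add: sum.union_disjoint)
  qed
  also have "(\<Sum>v\<in>uminus ` S. ?c v) = (\<Sum>b\<in>S. involution_sign_sum (S - {b}))"
    using pos a_notin by (simp add: sum.reindex inj_on_def) (intro sum.cong; auto)
  also have "(\<Sum>v\<in>S. ?c v) = (\<Sum>b\<in>S. involution_sign_sum (S - {b}))"
    using pos a_notin by (intro sum.cong) auto
  finally show ?thesis using a_pos by simp
qed

fun involution_sign_sum_nat :: "nat \<Rightarrow> int" where
  "involution_sign_sum_nat 0 = 1"
| "involution_sign_sum_nat (Suc 0) = 0"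
| "involution_sign_sum_nat (Suc (Suc m)) = 2 * int (Suc m) * involution_sign_sum_nat m"

lemma involution_sign_sum_eq_nat:
  "finite S \<Longrightarrow> \<forall>x\<in>S. 0 < x \<Longrightarrow> card S = n \<Longrightarrow> involution_sign_sum S = involution_sign_sum_nat n"
proof (induction n arbitrary: S rule: involution_sign_sum_nat.induct)
  case 1
  then show ?case by (simp add: involution_sign_sum_empty)
next
  case 2
  then obtain a where "S = {a}" by (metis One_nat_def card_1_singletonE)
  then show ?case using 2 involution_sign_sum_insert[of a "{}"] by simp
next
  case (3 m)
  then obtain a S0 where S: "S = insert a S0" and a_notin: "a \<notin> S0" and card_S0: "card S0 = Suc m"
    by (metis card_Suc_eq)
  have fin: "finite S0" using "3.prems" S by simp
  have "involution_sign_sum (S0 - {b}) = involution_sign_sum_nat m" if "b \<in> S0" for b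
    using that "3.IH"[of "S0 - {b}"] "3.prems" S fin card_S0 by simp
  then show ?case
    using involution_sign_sum_insert[of a S0] "3.prems" S a_notin fin card_S0 by simp
qed

lemma involution_sign_sum_nat_eq:
  "involution_sign_sum_nat n = (if odd n then 0 else 2 ^ (n div 2) * int (dfact (n - 1)))"
proof (induction n rule: involution_sign_sum_nat.induct)
  case (3 m)
  then show ?case by (cases m) (auto simp: algebra_simps)
qed simp_all

lemma signed_set_atLeastAtMost: "signed_set {1 .. int n} = {- int n .. int n} - {0}"
  by (auto simp: in_signed_set_iff)

lemma involutions_typeB: "{w \<in> typeB n. w \<circ> w = id} = signed_involutions {1 .. int n}"
proof -
  have "w \<circ> w = id \<longleftrightarrow> (\<forall>x. w (w x) = x)" for w :: "int \<Rightarrow> int"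
    by (auto simp: fun_eq_iff)
  then show ?thesis
    unfolding typeB_def signed_involutions_def signed_set_atLeastAtMost[symmetric]
    using signed_involution_permutes unfolding signed_involutions_def permutes_def by blast
qed

lemma involutions_typeD:
  "{w \<in> typeD n. w \<circ> w = id} = {w \<in> signed_involutions {1 .. int n}. 0 < (\<Prod>i\<in>{1 .. int n}. w i)}"
  using involutions_typeB[of n] unfolding typeD_def by auto

theorem lemma5p13:
  fixes n :: nat
  assumes "n \<ge> 1"
  shows "2 * int (num_involutions (typeD n)) - int (num_involutions (typeB n)) =
           (if odd n then 0 else 2 ^ (n div 2) * int (dfact (n - 1)))
       \<and> (even n \<longrightarrow> real (2 ^ (n div 2) * dfact (n - 1)) = fact n / fact (n div 2))
       \<and> num_involutions (typeD n) \<le> num_involutions (typeB n)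
       \<and> num_involutions (typeB n) \<le> 2 * num_involutions (typeD n)"
proof -
  let ?S = "{1 .. int n}"
  let ?I = "signed_involutions ?S"
  let ?I_pos = "{w \<in> ?I. 0 < (\<Prod>i\<in>?S. w i)}"
  have card_B: "num_involutions (typeB n) = card ?I"
    unfolding num_involutions_def involutions_typeB ..
  have card_D: "num_involutions (typeD n) = card ?I_pos"
    unfolding num_involutions_def involutions_typeD ..
  have "(\<Prod>i\<in>?S. w i) \<noteq> 0" if "w \<in> ?I" for w
    using signed_involution_prod_nonzero[OF that] by simp
  then have "2 * int (card ?I_pos) - int (card ?I) = involution_sign_sum ?S"
    unfolding involution_sign_sum_def
    by (intro sum_sgn_eq_card[symmetric] finite_signed_involutions) auto
  also have "\<dots> = (if odd n then 0 else 2 ^ (n div 2) * int (dfact (n - 1)))"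
    by (simp add: involution_sign_sum_eq_nat involution_sign_sum_nat_eq)
  finally have balance: "2 * int (card ?I_pos) - int (card ?I) =
      (if odd n then 0 else 2 ^ (n div 2) * int (dfact (n - 1)))" .
  have "card ?I_pos \<le> card ?I"
    by (intro card_mono finite_signed_involutions) auto
  moreover have "even n \<longrightarrow> real (2 ^ (n div 2) * dfact (n - 1)) = fact n / fact (n div 2)"
    using dfact_eq_fact_div[of "n div 2"] by auto
  moreover have "0 \<le> (if odd n then 0 else 2 ^ (n div 2) * int (dfact (n - 1)))"
    by simp
  ultimately show ?thesis
    using balance unfolding card_B card_D by linarith
qed

end
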